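(* Fix an iteration $t$, an agent $p$, and $\ell>0$. Let $w^{t+1},\lambda^t_p,z^t_p\in\mathbb{R}^{J\times K}$, $\rho^t>0$, $\eta^t>0$ be given and independent of the data. For a dataset $\mathcal{D}$ let $$z^{t+1}_p(\ell;\mathcal{D})=\operatorname{argmin}_{z\in\mathbb{R}^{J\times K}}\langle f'_p(z^t_p;\mathcal{D}),z\rangle+\tfrac{\rho^t}{2}\big\|w^{t+1}-z+\tfrac1{\rho^t}(\lambda^t_p-\tilde\xi^t_p)\big\|^2+\tfrac1{2\eta^t}\|z-z^t_p\|^2+\sum_{m=1}^M\ln(1+e^{\ell h_m(z)}),$$ where $\tilde\xi^t_p$ has i.i.d. Laplace entries with mean $0$ and scale $\bar\Delta^t_p/\bar\epsilon$ (joint density proportional to $\exp(-\bar\epsilon\|\tilde\xi^t_p\|_1/\bar\Delta^t_p)$), $\bar\epsilon>0$, $\bar\Delta^t_p=\max_{\mathcal{D}'_p\in\widehat{\mathcal{D}}_p}\|f'_p(z^t_p;\mathcal{D}_p)-f'_p(z^t_p;\mathcal{D}'_p)\|_1$, the same noise distribution being used for $\mathcal{D}_p$ and its neighbours. Then for all measurable $\mathcal{S}\subset\mathbb{R}^{J\times K}$ and all $\mathcal{D}'_p\in\widehat{\mathcal{D}}_p$, $$e^{-\bar\epsilon}\,\mathbb{P}(z^{t+1}_p(\ell;\mathcal{D}'_p)\in\mathcal{S})\le\mathbb{P}(z^{t+1}_p(\ell;\mathcal{D}_p)\in\mathcal{S})\le e^{\bar\epsilon}\,\mathbb{P}(z^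{t+1}_p(\ell;\mathcal{D}'_p)\in\mathcal{S}).$$
   Context: $\mathbb{R}^{J\times K}$ carries the Frobenius inner product and norm; $\|\cdot\|_1$ is the entrywise $\ell_1$-norm. Agent $p$ holds $\mathcal{D}_p=\{(x_{pi},y_{pi})\}_{i=1}^{I_p}$; for a dataset $\mathcal{D}$ of this form, $f_p(z;\mathcal{D})=\frac1I\sum_{(x,y)\in\mathcal{D}}\varphi(z;x,y)+\frac\beta Pr(z)$ with convex loss $\varphi$, convex regularizer $r$, $\beta>0$, $I>0$ fixed; $f'_p(z;\mathcal{D})$ is a fixed subgradient at $z$. $\widehat{\mathcal{D}}_p$ is the collection of datasets differing from $\mathcal{D}_p$ in a single entry. $h_1,\dots,h_M$ are convex, twice continuously differentiable functions on $\mathbb{R}^{J\times K}$ (describing a compact convex set $\mathcal{W}=\{z:h_m(z)\le0\ \forall m\}$). The objective is strongly convex, so the minimizer is unique. *)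

theory Defs
  imports "HOL-Analysis.Analysis" "HOL-Probability.Probability"
begin

text \<open>Matrices in R^{J x K} are modelled as real ^ 'k ^ 'j; the inner product and norm
of this Euclidean space are the Frobenius inner product and norm.\<close>

type_synonym ('j, 'k) mat = "real ^ 'k ^ 'j"

definition l1norm :: "real ^ 'k ^ 'j \<Rightarrow> real" where
  "l1norm A = (\<Sum>i\<in>UNIV. \<Sum>k\<in>UNIV. \<bar>A $ i $ k\<bar>)"

definition f_loc :: "('m \<Rightarrow> 'x \<Rightarrow> 'y \<Rightarrow> real) \<Rightarrow> ('m \<Rightarrow> real) \<Rightarrow> real \<Rightarrow> real \<Rightarrow> real
     \<Rightarrow> 'm \<Rightarrow> ('x \<times> 'y) list \<Rightarrow> real" where
  "f_loc \<phi> r I \<beta> P z D = (1 / I) * (\<Sum>(x, y)\<leftarrow>D. \<phi> z x y) + (\<beta> / P) * r z"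

definition neighbours :: "'a list \<Rightarrow> 'a list set" where
  "neighbours D = {D'. \<exists>i < length D. \<exists>d. d \<noteq> D ! i \<and> D' = D[i := d]}"

definition sensitivity :: "(('x \<times> 'y) list \<Rightarrow> real ^ 'k ^ 'j) \<Rightarrow> ('x \<times> 'y) list \<Rightarrow> real" where
  "sensitivity g D = (GREATEST v. v \<in> (\<lambda>D'. l1norm (g D - g D')) ` neighbours D)"

definition twice_cont_diff :: "('a::euclidean_space \<Rightarrow> real) \<Rightarrow> bool" where
  "twice_cont_diff h \<longleftrightarrow> (\<exists>g H. (\<forall>z. (h has_derivative (\<lambda>v. g z \<bullet> v)) (at z)) \<and>
      (\<forall>z. (g has_derivative H z) (at z)) \<and> (\<forall>v. continuous_on UNIV (\<lambda>z. H z v)))"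

text \<open>Matrix with i.i.d. Laplace(0, b) entries: density proportional to exp(-||xi||_1 / b)
w.r.t. Lebesgue measure, normalised.\<close>
definition laplace_mat :: "real \<Rightarrow> (real ^ 'k ^ 'j) measure" where
  "laplace_mat b = density lborel
     (\<lambda>\<xi>. ennreal ((1 / (2 * b)) ^ (CARD('j) * CARD('k)) * exp (- l1norm \<xi> / b)))"

definition upd_obj :: "real ^ 'k ^ 'j \<Rightarrow> real ^ 'k ^ 'j \<Rightarrow> real ^ 'k ^ 'j \<Rightarrow> real \<Rightarrow> real
     \<Rightarrow> nat \<Rightarrow> (nat \<Rightarrow> real ^ 'k ^ 'j \<Rightarrow> real) \<Rightarrow> real
     \<Rightarrow> real ^ 'k ^ 'j \<Rightarrow> real ^ 'k ^ 'j \<Rightarrow> real ^ 'k ^ 'j \<Rightarrow> real" where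
  "upd_obj w lam zt \<rho> \<eta> M h ell grad \<xi> z =
     grad \<bullet> z + \<rho> / 2 * (norm (w - z + (1 / \<rho>) *\<^sub>R (lam - \<xi>)))\<^sup>2
     + 1 / (2 * \<eta>) * (norm (z - zt))\<^sup>2
     + (\<Sum>m<M. ln (1 + exp (ell * h m z)))"

definition z_next :: "real ^ 'k ^ 'j \<Rightarrow> real ^ 'k ^ 'j \<Rightarrow> real ^ 'k ^ 'j \<Rightarrow> real \<Rightarrow> real
     \<Rightarrow> nat \<Rightarrow> (nat \<Rightarrow> real ^ 'k ^ 'j \<Rightarrow> real) \<Rightarrow> real
     \<Rightarrow> real ^ 'k ^ 'j \<Rightarrow> real ^ 'k ^ 'j \<Rightarrow> real ^ 'k ^ 'j" where
  "z_next w lam zt \<rho> \<eta> M h ell grad \<xi> =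
     (THE z. \<forall>u. upd_obj w lam zt \<rho> \<eta> M h ell grad \<xi> z \<le> upd_obj w lam zt \<rho> \<eta> M h ell grad \<xi> u)"

end

theory Submission
  imports Defs
begin

text \<open>The noise enters the update objective only through the linear term
  \<open>(f'\<^sub>p + \<xi>) \<bullet> z\<close>, up to a constant independent of \<open>z\<close>; hence the minimiser is a fixed
  function of \<open>f'\<^sub>p + \<xi>\<close>, and the update is post-processing of the Laplace mechanism applied
  to the gradient. Translating a Laplace density by a vector of \<open>\<ell>\<^sub>1\<close>-norm at most
  \<open>\<epsilon> b\<close> changes it pointwise by a factor at most \<open>exp \<epsilon>\<close>, by the triangle inequality, and
  translation invariance of Lebesgue measure turns this into the bound on probabilities.\<close>

lemma continuous_on_l1norm: "continuous_on UNIV (l1norm :: real ^ 'k ^ 'j \<Rightarrow> real)"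
  unfolding l1norm_def by (intro continuous_intros)

lemma borel_measurable_l1norm [measurable]:
  "(l1norm :: real ^ 'k ^ 'j \<Rightarrow> real) \<in> borel_measurable borel"
  using continuous_on_l1norm by (rule borel_measurable_continuous_onI)

lemma l1norm_triangle: "l1norm (a + b :: real ^ 'k ^ 'j) \<le> l1norm a + l1norm b"
  unfolding l1norm_def sum.distrib[symmetric]
  by (intro sum_mono) (simp add: abs_triangle_ineq)

lemma l1norm_minus_commute: "l1norm (a - b :: real ^ 'k ^ 'j) = l1norm (b - a)"
  unfolding l1norm_def by (simp add: abs_minus_commute)

lemma l1norm_le_sensitivity:
  assumes "\<exists>D'\<in>neighbours D. \<forall>D''\<in>neighbours D. l1norm (g D - g D'') \<le> l1norm (g D - g D')"
    and "D' \<in> neighbours D"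
  shows "l1norm (g D - g D') \<le> sensitivity g D"
proof -
  obtain D\<^sub>0 where "D\<^sub>0 \<in> neighbours D"
    and max: "\<forall>D''\<in>neighbours D. l1norm (g D - g D'') \<le> l1norm (g D - g D\<^sub>0)"
    using assms(1) by blast
  then have "sensitivity g D = l1norm (g D - g D\<^sub>0)"
    unfolding sensitivity_def by (intro Greatest_equality) auto
  with max assms(2) show ?thesis by simp
qed

lemma nn_integral_lborel_translate:
  fixes G :: "'a::euclidean_space \<Rightarrow> ennreal"
  assumes [measurable]: "G \<in> borel_measurable borel"
  shows "(\<integral>\<^sup>+x. G (c + x) \<partial>lborel) = (\<integral>\<^sup>+x. G x \<partial>lborel)"
proof -
  have "(\<integral>\<^sup>+x. G x \<partial>lborel) = (\<integral>\<^sup>+x. G x \<partial>distr lborel borel ((+) c))"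
    by (simp add: lborel_distr_plus)
  also have "\<dots> = (\<integral>\<^sup>+x. G (c + x) \<partial>lborel)"
    by (subst nn_integral_distr) auto
  finally show ?thesis by simp
qed

lemma enn2real_le_mult_if_mutually_bounded:
  assumes "x \<le> ennreal c * y" and "y \<le> ennreal c * x" and "c \<ge> 0"
  shows "enn2real x \<le> c * enn2real y"
proof (cases "y = \<top>")
  case True
  with assms(2) have "x = \<top>" by (auto simp: ennreal_mult_eq_top_iff top_unique)
  with True show ?thesis by simp
next
  case False
  then have "enn2real x \<le> enn2real (ennreal c * y)"
    using assms(1) by (intro enn2real_mono) (auto simp: ennreal_mult_less_top top.not_eq_extremum)
  also have "\<dots> = c * enn2real y"
    using assms(3) by (simp add: enn2real_mult)
  finally show ?thesis .
qed

definition laplace_density :: "real \<Rightarrow> real ^ 'k ^ 'j \<Rightarrow> real" where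
  "laplace_density b \<xi> = (1 / (2 * b)) ^ (CARD('j) * CARD('k)) * exp (- l1norm \<xi> / b)"

lemma borel_measurable_laplace_density [measurable]:
  "laplace_density b \<in> borel_measurable borel"
  unfolding laplace_density_def by measurable

lemma laplace_density_translate_le:
  fixes g\<^sub>1 g\<^sub>2 :: "real ^ 'k ^ 'j"
  assumes "b > 0" and "l1norm (g\<^sub>1 - g\<^sub>2) \<le> \<epsilon> * b"
  shows "laplace_density b (v - g\<^sub>1) \<le> exp \<epsilon> * laplace_density b (v - g\<^sub>2)"
proof -
  have "l1norm (v - g\<^sub>2) \<le> l1norm (v - g\<^sub>1) + l1norm (g\<^sub>1 - g\<^sub>2)"
    using l1norm_triangle[of "v - g\<^sub>1" "g\<^sub>1 - g\<^sub>2"] by simp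
  with assms have "(l1norm (v - g\<^sub>2) - l1norm (v - g\<^sub>1)) / b \<le> \<epsilon>"
    by (simp add: divide_le_eq)
  then have "- l1norm (v - g\<^sub>1) / b \<le> \<epsilon> + - l1norm (v - g\<^sub>2) / b"
    by (simp add: diff_divide_distrib)
  then have "exp (- l1norm (v - g\<^sub>1) / b) \<le> exp \<epsilon> * exp (- l1norm (v - g\<^sub>2) / b)"
    by (simp add: exp_add[symmetric])
  with assms(1) show ?thesis
    unfolding laplace_density_def by (simp add: mult.left_commute)
qed

lemma emeasure_laplace_mat_translate:
  fixes g :: "real ^ 'k ^ 'j"
  assumes [measurable]: "A \<in> sets borel"
  shows "emeasure (laplace_mat b) {\<xi>. g + \<xi> \<in> A}
    = (\<integral>\<^sup>+v. ennreal (laplace_density b (v - g)) * indicator A v \<partial>lborel)"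
proof -
  have "{\<xi>. g + \<xi> \<in> A} = (\<lambda>\<xi>. g + \<xi>) -` A \<inter> space lborel" by auto
  also have "\<dots> \<in> sets lborel" by measurable
  finally have [measurable]: "{\<xi>. g + \<xi> \<in> A} \<in> sets lborel" .
  have "emeasure (laplace_mat b) {\<xi>. g + \<xi> \<in> A}
      = (\<integral>\<^sup>+\<xi>. ennreal (laplace_density b ((g + \<xi>) - g)) * indicator A (g + \<xi>) \<partial>lborel)"
    unfolding laplace_mat_def laplace_density_def
    by (subst emeasure_density) (auto intro!: nn_integral_cong split: split_indicator)
  also have "\<dots> = (\<integral>\<^sup>+v. ennreal (laplace_density b (v - g)) * indicator A v \<partial>lborel)"
    by (rule nn_integral_lborel_translate) measurable
  finally show ?thesis .
qed

lemma emeasure_laplace_mat_translate_le: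
  fixes g\<^sub>1 g\<^sub>2 :: "real ^ 'k ^ 'j"
  assumes [measurable]: "A \<in> sets borel" and "b > 0" and "l1norm (g\<^sub>1 - g\<^sub>2) \<le> \<epsilon> * b"
  shows "emeasure (laplace_mat b) {\<xi>. g\<^sub>1 + \<xi> \<in> A}
    \<le> ennreal (exp \<epsilon>) * emeasure (laplace_mat b) {\<xi>. g\<^sub>2 + \<xi> \<in> A}"
proof -
  have "ennreal (laplace_density b (v - g\<^sub>1)) * indicator A v
      \<le> ennreal (exp \<epsilon>) * (ennreal (laplace_density b (v - g\<^sub>2)) * indicator A v)" for v
    using laplace_density_translate_le[OF assms(2,3), of v]
    by (auto split: split_indicator simp: ennreal_mult'[symmetric] intro!: ennreal_leI)
  then show ?thesis
    unfolding emeasure_laplace_mat_translate[OF assms(1)]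
    by (subst nn_integral_cmult[symmetric]) (measurable, intro nn_integral_mono)
qed

text \<open>No measurability of \<open>A\<close> is assumed: if \<open>A\<close> is not Borel, neither translated event is
  measurable and both sides are \<open>0\<close>.\<close>

lemma measure_laplace_mat_translate_le:
  fixes g\<^sub>1 g\<^sub>2 :: "real ^ 'k ^ 'j"
  assumes "b > 0" and "l1norm (g\<^sub>1 - g\<^sub>2) \<le> \<epsilon> * b"
  shows "measure (laplace_mat b) {\<xi>. g\<^sub>1 + \<xi> \<in> A}
    \<le> exp \<epsilon> * measure (laplace_mat b) {\<xi>. g\<^sub>2 + \<xi> \<in> A}"
proof (cases "A \<in> sets borel")
  case True
  have "l1norm (g\<^sub>2 - g\<^sub>1) \<le> \<epsilon> * b"
    using assms(2) l1norm_minus_commute[of g\<^sub>2 g\<^sub>1] by simp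
  then show ?thesis
    unfolding measure_def
    by (intro enn2real_le_mult_if_mutually_bounded emeasure_laplace_mat_translate_le True assms)
      simp_all
next
  case False
  have "{\<xi>. g + \<xi> \<in> A} \<notin> sets (laplace_mat b)" for g :: "real ^ 'k ^ 'j"
  proof
    assume "{\<xi>. g + \<xi> \<in> A} \<in> sets (laplace_mat b)"
    then have [measurable]: "{\<xi>. g + \<xi> \<in> A} \<in> sets borel"
      by (simp add: laplace_mat_def)
    have "A = (\<lambda>v. v - g) -` {\<xi>. g + \<xi> \<in> A} \<inter> space borel" by auto
    also have "\<dots> \<in> sets borel" by measurable
    finally show False using False by simp
  qed
  then show ?thesis by (simp add: measure_notin_sets)
qed

lemma upd_obj_eq_translate:
  assumes "\<rho> > 0"
  shows "upd_obj w lam zt \<rho> \<eta> M h ell g \<xi> z = upd_obj w lam zt \<rho> \<eta> M h ell 0 (g + \<xi>) z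
     + ((w + (1 / \<rho>) *\<^sub>R lam) \<bullet> g + ((norm \<xi>)\<^sup>2 - (norm (g + \<xi>))\<^sup>2) / (2 * \<rho>))"
  using assms unfolding upd_obj_def power2_norm_eq_inner
  by (simp add: inner_diff_left inner_diff_right inner_add_left inner_add_right algebra_simps
        inner_commute add_divide_distrib diff_divide_distrib)

lemma z_next_eq_translate:
  assumes "\<rho> > 0"
  shows "z_next w lam zt \<rho> \<eta> M h ell g \<xi> = z_next w lam zt \<rho> \<eta> M h ell 0 (g + \<xi>)"
  unfolding z_next_def upd_obj_eq_translate[OF assms, of w lam zt _ M h ell g \<xi>] by simp

theorem proposition2:
  fixes \<phi> :: "real ^ 'k ^ 'j \<Rightarrow> 'x \<Rightarrow> 'y \<Rightarrow> real"
    and r :: "real ^ 'k ^ 'j \<Rightarrow> real"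
    and I \<beta> P :: real
    and fp' :: "real ^ 'k ^ 'j \<Rightarrow> ('x \<times> 'y) list \<Rightarrow> real ^ 'k ^ 'j"
    and h :: "nat \<Rightarrow> real ^ 'k ^ 'j \<Rightarrow> real" and M :: nat
    and Dp :: "('x \<times> 'y) list"
    and w lam zt :: "real ^ 'k ^ 'j"
    and \<rho> \<eta> \<epsilon> ell :: real
  assumes conv_phi: "\<And>x y. convex_on UNIV (\<lambda>z. \<phi> z x y)"
    and conv_r: "convex_on UNIV r"
    and I_pos: "I > 0" and beta_pos: "\<beta> > 0" and P_pos: "P > 0"
    and subgrad: "\<And>z D u. f_loc \<phi> r I \<beta> P u D \<ge> f_loc \<phi> r I \<beta> P z D + fp' z D \<bullet> (u - z)"
    and conv_h: "\<And>m. m < M \<Longrightarrow> convex_on UNIV (h m)"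
    and smooth_h: "\<And>m. m < M \<Longrightarrow> twice_cont_diff (h m)"
    and W_compact: "compact {z. \<forall>m<M. h m z \<le> 0}"
    and ell_pos: "ell > 0" and rho_pos: "\<rho> > 0" and eta_pos: "\<eta> > 0" and eps_pos: "\<epsilon> > 0"
    and max_attained: "\<exists>D'\<in>neighbours Dp. \<forall>D''\<in>neighbours Dp.
            l1norm (fp' zt Dp - fp' zt D'') \<le> l1norm (fp' zt Dp - fp' zt D')"
    and sens_pos: "sensitivity (fp' zt) Dp > 0"
    and S_meas: "S \<in> sets borel"
    and nb: "Dp' \<in> neighbours Dp"
  shows "exp (- \<epsilon>) * measure (laplace_mat (sensitivity (fp' zt) Dp / \<epsilon>))
            {\<xi>. z_next w lam zt \<rho> \<eta> M h ell (fp' zt Dp') \<xi> \<in> S}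
         \<le> measure (laplace_mat (sensitivity (fp' zt) Dp / \<epsilon>))
            {\<xi>. z_next w lam zt \<rho> \<eta> M h ell (fp' zt Dp) \<xi> \<in> S}
       \<and> measure (laplace_mat (sensitivity (fp' zt) Dp / \<epsilon>))
            {\<xi>. z_next w lam zt \<rho> \<eta> M h ell (fp' zt Dp) \<xi> \<in> S}
         \<le> exp \<epsilon> * measure (laplace_mat (sensitivity (fp' zt) Dp / \<epsilon>))
            {\<xi>. z_next w lam zt \<rho> \<eta> M h ell (fp' zt Dp') \<xi> \<in> S}"
proof -
  define b where "b = sensitivity (fp' zt) Dp / \<epsilon>"
  define A where "A = {v. z_next w lam zt \<rho> \<eta> M h ell 0 v \<in> S}"
  define prob where "prob g = measure (laplace_mat b) {\<xi>. g + \<xi> \<in> A}" for g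
  have "b > 0" using sens_pos eps_pos by (simp add: b_def)
  have "l1norm (fp' zt Dp - fp' zt Dp') \<le> \<epsilon> * b"
    using l1norm_le_sensitivity[OF max_attained nb] eps_pos by (simp add: b_def)
  then have le: "prob (fp' zt Dp) \<le> exp \<epsilon> * prob (fp' zt Dp')"
    and ge: "prob (fp' zt Dp') \<le> exp \<epsilon> * prob (fp' zt Dp)"
    unfolding prob_def using \<open>b > 0\<close>
    by (auto intro: measure_laplace_mat_translate_le simp: l1norm_minus_commute)
  from ge have "exp (- \<epsilon>) * prob (fp' zt Dp') \<le> prob (fp' zt Dp)"
    by (simp add: exp_minus field_simps)
  moreover have "{\<xi>. z_next w lam zt \<rho> \<eta> M h ell g \<xi> \<in> S} = {\<xi>. g + \<xi> \<in> A}" for g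
    unfolding A_def by (simp add: z_next_eq_translate[OF rho_pos, of _ _ _ _ _ _ _ g])
  ultimately show ?thesis
    using le unfolding prob_def b_def[symmetric] by simp
qed

end
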